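(* Fix $0<q<1$. For $t_0>\log(1/q)$ and $\varepsilon>0$ define $$\omega^*(\varepsilon;t_0)=\sup\{|T_q(G')-t_0|:\ G\in\mathcal G,\ T_q(G)=t_0,\ \|G-G'\|\le\varepsilon\},$$ the supremum being over such $G$ and cdfs $G'$. Then for each fixed $t_0>\log(1/q)$, $$\omega^*(\varepsilon;t_0)\le\frac{q}{\log(1/q)}\,t_0e^{t_0}\,\varepsilon\,(1+o(1))\quad\text{as }\varepsilon\to0.$$
   Context: $E(t)=1-e^{-t}$, $\bar E=1-E$, $\bar G=1-G$. $\mathcal G=\{E\#F:F$ a probability distribution on $[1,\infty)\}$ with $(E\#F)(t)=\int E(t/\mu)\,dF(\mu)$. FDR functional $T_q(G)=\inf\{t:\bar G(t)\ge\frac1q\bar E(t)\}$ for any cdf $G$. $\|G-G'\|=\sup_t|G(t)-G'(t)|$ (Kolmogorov–Smirnov distance). *)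

theory Defs
  imports "HOL-Probability.Probability"
begin

definition Ecdf :: "real \<Rightarrow> real" where
  "Ecdf t = (if t < 0 then 0 else 1 - exp (- t))"

definition is_cdf :: "(real \<Rightarrow> real) \<Rightarrow> bool" where
  "is_cdf G \<longleftrightarrow> mono G \<and> (\<forall>x. continuous (at_right x) G)
     \<and> (G \<longlongrightarrow> 0) at_bot \<and> (G \<longlongrightarrow> 1) at_top"

definition mixE :: "real measure \<Rightarrow> real \<Rightarrow> real" where
  "mixE F t = (\<integral>\<mu>. Ecdf (t / \<mu>) \<partial>F)"

definition mixClass :: "(real \<Rightarrow> real) set" where
  "mixClass = {mixE F | F. prob_space F \<and> sets F = sets borel \<and> measure F {1..} = 1}"

text \<open>FDR functional T_q(G) = inf{t : 1 - G t \<ge> (1 - E t)/q} (infimum of the empty set is \<infinity>).\<close>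
definition Tq :: "real \<Rightarrow> (real \<Rightarrow> real) \<Rightarrow> ereal" where
  "Tq q G = Inf {ereal t | t. 1 - G t \<ge> (1 - Ecdf t) / q}"

definition ks_dist :: "(real \<Rightarrow> real) \<Rightarrow> (real \<Rightarrow> real) \<Rightarrow> ereal" where
  "ks_dist G G' = (SUP t. ereal \<bar>G t - G' t\<bar>)"

definition omega_star :: "real \<Rightarrow> real \<Rightarrow> real \<Rightarrow> ereal" where
  "omega_star q eps t0 = Sup {\<bar>Tq q G' - ereal t0\<bar> | G G'.
      G \<in> mixClass \<and> Tq q G = ereal t0 \<and> is_cdf G' \<and> ks_dist G G' \<le> ereal eps}"

end

theory Submission
  imports Defs
begin

(*
  Write G = E # F. For t \<ge> 0 one has 1 - G t = exp (- t) * \<phi> t, where \<phi> = mix_mgf F is the moment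
  generating function of 1 - 1/\<mu> \<in> [0, 1] under F. Hence T_q(G) = t0 forces \<phi> t0 = 1/q, and
  Jensen's inequality (log-convexity of \<phi> together with \<phi> 0 = 1) puts \<phi> below (1/q)^(t/t0) on
  [0, t0] and above it beyond t0. So 1 - G crosses the boundary exp (- t) / q at t0 transversally,
  with relative slope at least ln (1/q) / t0, and a Kolmogorov-Smirnov perturbation of size eps can
  move the crossing by at most about q t0 exp t0 eps / ln (1/q).
*)

lemma (in prob_space) expectation_exp_powr_le:
  fixes X :: "'a \<Rightarrow> real"
  assumes int_t: "integrable M (\<lambda>x. exp (t * X x))"
    and int_s: "integrable M (\<lambda>x. exp (s * X x))"
    and "0 < t" "t \<le> s"
  shows "expectation (\<lambda>x. exp (t * X x)) powr (s / t) \<le> expectation (\<lambda>x. exp (s * X x))"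
proof -
  have powr_exp: "exp (t * X x) powr (s / t) = exp (s * X x)" for x
    using \<open>0 < t\<close> by (simp add: powr_def)
  have "convex_on {0<..} (\<lambda>y. y powr (s / t))"
    using assms by (intro powr_convex) simp
  then show ?thesis
    using jensens_inequality[of "\<lambda>x. exp (t * X x)" "{0<..}" 0 _ "\<lambda>y. y powr (s / t)"] int_t int_s
    by (simp add: powr_exp)
qed

lemma Inf_superlevel_eq:
  fixes f :: "real \<Rightarrow> real"
  assumes growth: "\<And>t s. t \<le> s \<Longrightarrow> f s \<le> exp (s - t) * f t"
    and "0 < c" "0 < t0" "0 < f t0"
    and Inf: "Inf {ereal t | t. 0 \<le> t \<and> c \<le> f t} = ereal t0"
  shows "f t0 = c"
proof -
  let ?S = "{ereal t | t. 0 \<le> t \<and> c \<le> f t}"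
  have below: "t0 \<le> t" if "0 \<le> t" "c \<le> f t" for t
    using Inf_lower[of "ereal t" ?S] that Inf by auto
  have "\<not> c < f t0"
  proof
    assume "c < f t0"
    define \<eta> where "\<eta> = min t0 (ln (f t0 / c))"
    have "0 < \<eta>"
      using \<open>c < f t0\<close> \<open>0 < c\<close> \<open>0 < t0\<close> by (simp add: \<eta>_def)
    have "c = exp (- ln (f t0 / c)) * f t0"
      using \<open>0 < c\<close> \<open>0 < f t0\<close> by (simp add: exp_minus)
    also have "\<dots> \<le> exp (- \<eta>) * f t0"
      using \<open>0 < f t0\<close> by (simp add: \<eta>_def)
    also have "\<dots> \<le> f (t0 - \<eta>)"
      using growth[of "t0 - \<eta>" t0] \<open>0 < \<eta>\<close> by (simp add: exp_minus field_simps)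
    finally have "t0 \<le> t0 - \<eta>"
      using below[of "t0 - \<eta>"] by (simp add: \<eta>_def)
    then show False
      using \<open>0 < \<eta>\<close> by simp
  qed
  moreover have "\<not> f t0 < c"
  proof
    assume "f t0 < c"
    define \<eta> where "\<eta> = ln (c / f t0)"
    have "0 < \<eta>"
      using \<open>f t0 < c\<close> \<open>0 < f t0\<close> by (simp add: \<eta>_def)
    have "ereal (t0 + \<eta>) \<le> Inf ?S"
    proof (rule Inf_greatest)
      fix x assume "x \<in> ?S"
      then obtain t where x: "x = ereal t" and "0 \<le> t" "c \<le> f t"
        by blast
      have "t0 + \<eta> \<le> t"
      proof (rule ccontr)
        assume "\<not> t0 + \<eta> \<le> t"
        have "f t \<le> exp (t - t0) * f t0"
          using growth below[OF \<open>0 \<le> t\<close> \<open>c \<le> f t\<close>] .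
        also have "\<dots> < exp \<eta> * f t0"
          using \<open>\<not> t0 + \<eta> \<le> t\<close> \<open>0 < f t0\<close> by simp
        also have "\<dots> = c"
          using \<open>0 < c\<close> \<open>0 < f t0\<close> by (simp add: \<eta>_def)
        finally show False
          using \<open>c \<le> f t\<close> by simp
      qed
      then show "ereal (t0 + \<eta>) \<le> x"
        by (simp add: x)
    qed
    then show False
      using Inf \<open>0 < \<eta>\<close> by simp
  qed
  ultimately show ?thesis
    by simp
qed

lemma ks_dist_le_iff: "ks_dist G G' \<le> ereal eps \<longleftrightarrow> (\<forall>t. \<bar>G t - G' t\<bar> \<le> eps)"
  by (simp add: ks_dist_def SUP_le_iff)

lemma Tq_perturbed_le:
  fixes G G' :: "real \<Rightarrow> real"
  assumes "0 < t0" "0 \<le> B"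
    and surv: "exp (- (t0 + B)) * (1 / q) powr ((t0 + B) / t0) \<le> 1 - G (t0 + B)"
    and close: "\<bar>G (t0 + B) - G' (t0 + B)\<bar> \<le> eps"
    and eps: "eps * exp (t0 + B) \<le> (1 / q) powr ((t0 + B) / t0) - 1 / q"
  shows "Tq q G' \<le> ereal (t0 + B)"
proof -
  let ?s = "t0 + B"
  have "eps = exp (- ?s) * (eps * exp ?s)"
    by (simp add: mult.left_commute flip: exp_add)
  also have "\<dots> \<le> exp (- ?s) * ((1 / q) powr (?s / t0) - 1 / q)"
    using eps by (intro mult_left_mono) auto
  finally have "eps \<le> \<dots>" .
  then have "(1 - Ecdf ?s) / q \<le> 1 - G' ?s"
    using surv close assms(1,2) by (simp add: Ecdf_def right_diff_distrib abs_le_iff)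
  then show ?thesis
    unfolding Tq_def by (intro Inf_lower) auto
qed

lemma Tq_perturbed_ge:
  fixes G G' :: "real \<Rightarrow> real"
  assumes q: "0 < q" "q < 1" and "0 < t0" "0 \<le> B"
    and nonneg: "\<And>t. t < 0 \<Longrightarrow> 0 \<le> G t"
    and surv: "\<And>t. 0 \<le> t \<Longrightarrow> t \<le> t0 \<Longrightarrow> 1 - G t \<le> exp (- t) * (1 / q) powr (t / t0)"
    and close: "\<And>t. \<bar>G t - G' t\<bar> \<le> eps"
    and eps_neg: "eps < 1 / q - 1"
    and eps: "eps * exp t0 \<le> 1 / q - (1 / q) powr ((t0 - B) / t0)"
  shows "ereal (t0 - B) \<le> Tq q G'"
  unfolding Tq_def
proof (rule Inf_greatest, clarify)
  fix t assume crit: "(1 - Ecdf t) / q \<le> 1 - G' t"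
  show "ereal (t0 - B) \<le> ereal t"
  proof (rule ccontr)
    assume "\<not> ereal (t0 - B) \<le> ereal t"
    then have "t < t0 - B" by simp
    show False
    proof (cases "t < 0")
      case True
      then have "1 / q \<le> 1 + eps"
        using crit nonneg[OF True] close[of t] by (simp add: Ecdf_def abs_le_iff)
      then show False
        using eps_neg by simp
    next
      case False
      then have "exp (- t) / q \<le> exp (- t) * (1 / q) powr (t / t0) + eps"
        using crit surv[of t] close[of t] \<open>t < t0 - B\<close> \<open>0 \<le> B\<close> by (simp add: Ecdf_def abs_le_iff)
      then have "exp t * (exp (- t) / q) \<le> exp t * (exp (- t) * (1 / q) powr (t / t0) + eps)"
        by (intro mult_left_mono) auto
      then have "1 / q \<le> (1 / q) powr (t / t0) + eps * exp t"
        by (simp add: distrib_left mult.assoc[symmetric] mult.commute flip: exp_add)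
      also have "\<dots> < (1 / q) powr ((t0 - B) / t0) + eps * exp t0"
      proof (rule add_less_le_mono)
        show "(1 / q) powr (t / t0) < (1 / q) powr ((t0 - B) / t0)"
          using \<open>t < t0 - B\<close> \<open>0 < t0\<close> q by (intro powr_less_mono divide_strict_right_mono) auto
        show "eps * exp t \<le> eps * exp t0"
          using \<open>t < t0 - B\<close> \<open>0 \<le> B\<close> close[of t] by (intro mult_left_mono) auto
      qed
      finally show False
        using eps by simp
    qed
  qed
qed

definition mix_mgf :: "real measure \<Rightarrow> real \<Rightarrow> real" where
  "mix_mgf F t = (\<integral>\<mu>. exp (t * (1 - 1 / \<mu>)) \<partial>F)"

locale scale_mixture = prob_space F for F :: "real measure" +
  assumes sets_F: "sets F = sets borel"
    and mass_atLeast_1: "measure F {1..} = 1"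
begin

lemma AE_ge_1: "AE \<mu> in F. 1 \<le> \<mu>"
  using AE_prob_1[OF mass_atLeast_1] by simp

lemma borel_measurable_F: "f \<in> borel_measurable borel \<Longrightarrow> f \<in> borel_measurable F"
  by (simp add: measurable_cong_sets[OF sets_F refl])

lemma integrable_exp_mgf: "integrable F (\<lambda>\<mu>. exp (t * (1 - 1 / \<mu>)))"
proof (rule integrable_const_bound[where B = "exp \<bar>t\<bar>"])
  show "AE \<mu> in F. norm (exp (t * (1 - 1 / \<mu>))) \<le> exp \<bar>t\<bar>"
    using AE_ge_1
  proof eventually_elim
    case (elim \<mu>)
    then have "\<bar>1 - 1 / \<mu>\<bar> \<le> 1"
      by (simp add: field_simps)
    then have "\<bar>t * (1 - 1 / \<mu>)\<bar> \<le> \<bar>t\<bar>"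
      using mult_left_le[of "\<bar>1 - 1 / \<mu>\<bar>" "\<bar>t\<bar>"] by (simp add: abs_mult)
    then show ?case
      by simp
  qed
qed (intro borel_measurable_F, measurable)

lemma mix_mgf_pos: "0 < mix_mgf F t"
  unfolding mix_mgf_def by (intro expectation_greater integrable_exp_mgf) simp

lemma mix_mgf_le_exp_diff:
  assumes "t \<le> s"
  shows "mix_mgf F s \<le> exp (s - t) * mix_mgf F t"
proof -
  have "mix_mgf F s \<le> (\<integral>\<mu>. exp (s - t) * exp (t * (1 - 1 / \<mu>)) \<partial>F)"
    unfolding mix_mgf_def
  proof (rule integral_mono_AE)
    show "AE \<mu> in F. exp (s * (1 - 1 / \<mu>)) \<le> exp (s - t) * exp (t * (1 - 1 / \<mu>))"
      using AE_ge_1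
    proof eventually_elim
      case (elim \<mu>)
      define a where "a = 1 - 1 / \<mu>"
      have "(s - t) * a \<le> s - t"
        using mult_left_le[of a "s - t"] elim assms by (simp add: a_def)
      then have "s * a \<le> (s - t) + t * a"
        by (simp add: left_diff_distrib)
      then show ?case
        by (simp add: a_def flip: exp_add)
    qed
  qed (auto intro: integrable_exp_mgf)
  then show ?thesis
    by (simp add: mix_mgf_def)
qed

lemma mix_mgf_powr_le:
  assumes "0 < t" "t \<le> s"
  shows "mix_mgf F t powr (s / t) \<le> mix_mgf F s"
  unfolding mix_mgf_def
  using expectation_exp_powr_le[OF integrable_exp_mgf integrable_exp_mgf assms] .

lemma one_minus_mixE:
  assumes "0 \<le> t"
  shows "1 - mixE F t = exp (- t) * mix_mgf F t"
proof -
  have "mixE F t = (\<integral>\<mu>. 1 - exp (- t) * exp (t * (1 - 1 / \<mu>)) \<partial>F)"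
    unfolding mixE_def
  proof (rule integral_cong_AE)
    show "AE \<mu> in F. Ecdf (t / \<mu>) = 1 - exp (- t) * exp (t * (1 - 1 / \<mu>))"
      using AE_ge_1
    proof eventually_elim
      case (elim \<mu>)
      have "exp (- t) * exp (t * (1 - 1 / \<mu>)) = exp (- (t / \<mu>))"
        by (simp add: algebra_simps flip: exp_add)
      moreover have "0 \<le> t / \<mu>"
        using elim assms by simp
      ultimately show ?case
        by (simp add: Ecdf_def)
    qed
  qed (intro borel_measurable_F, (unfold Ecdf_def)?, measurable)+
  also have "\<dots> = 1 - exp (- t) * mix_mgf F t"
    using integrable_exp_mgf[of t] by (simp add: mix_mgf_def prob_space)
  finally show ?thesis
    by simp
qed

lemma mixE_neg: "t < 0 \<Longrightarrow> mixE F t = 0"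
  unfolding mixE_def
  by (rule integral_eq_zero_AE) (use AE_ge_1 in \<open>auto simp: Ecdf_def divide_neg_pos elim!: eventually_mono\<close>)

lemma Tq_mixE:
  assumes "0 < q" "q < 1"
  shows "Tq q (mixE F) = Inf {ereal t | t. 0 \<le> t \<and> 1 / q \<le> mix_mgf F t}"
proof -
  have "(1 - Ecdf t) / q \<le> 1 - mixE F t \<longleftrightarrow> 0 \<le> t \<and> 1 / q \<le> mix_mgf F t" for t
  proof (cases "t < 0")
    case True
    then show ?thesis
      using assms by (simp add: mixE_neg Ecdf_def)
  next
    case False
    then show ?thesis
      by (simp add: one_minus_mixE Ecdf_def divide_inverse mult.commute)
  qed
  then show ?thesis
    unfolding Tq_def by simp
qed

lemma mix_mgf_at_Tq:
  assumes "0 < q" "q < 1" "0 < t0" "Tq q (mixE F) = ereal t0"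
  shows "mix_mgf F t0 = 1 / q"
  using assms by (intro Inf_superlevel_eq mix_mgf_le_exp_diff mix_mgf_pos) (simp_all add: Tq_mixE)

lemma one_minus_mixE_ge:
  assumes "0 < q" "q < 1" "0 < t0" "Tq q (mixE F) = ereal t0" "t0 \<le> s"
  shows "exp (- s) * (1 / q) powr (s / t0) \<le> 1 - mixE F s"
  using mix_mgf_powr_le[of t0 s] assms
  by (simp add: one_minus_mixE mix_mgf_at_Tq)

lemma one_minus_mixE_le:
  assumes "0 < q" "q < 1" "0 < t0" "Tq q (mixE F) = ereal t0" "0 \<le> t" "t \<le> t0"
  shows "1 - mixE F t \<le> exp (- t) * (1 / q) powr (t / t0)"
proof (cases "t = 0")
  case True
  then show ?thesis
    using assms by (simp add: one_minus_mixE mix_mgf_def prob_space)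
next
  case False
  then have "0 < t"
    using assms by simp
  have "mix_mgf F t = (mix_mgf F t powr (t0 / t)) powr (t / t0)"
    using \<open>0 < t\<close> assms mix_mgf_pos[of t] by (simp add: powr_powr)
  also have "\<dots> \<le> (1 / q) powr (t / t0)"
    using mix_mgf_powr_le[OF \<open>0 < t\<close> \<open>t \<le> t0\<close>] mix_mgf_at_Tq[OF assms(1-4)] \<open>0 < t\<close> assms
    by (intro powr_mono2) auto
  finally show ?thesis
    using assms by (simp add: one_minus_mixE)
qed

end

lemma omega_star_le:
  fixes q t0 B eps :: real
  assumes q: "0 < q" "q < 1" and "0 < t0" "0 \<le> B"
    and eps_neg: "eps < 1 / q - 1"
    and eps_above: "eps * exp (t0 + B) \<le> (1 / q) powr ((t0 + B) / t0) - 1 / q"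
    and eps_below: "eps * exp t0 \<le> 1 / q - (1 / q) powr ((t0 - B) / t0)"
  shows "omega_star q eps t0 \<le> ereal B"
  unfolding omega_star_def
proof (rule Sup_least, clarify)
  fix G G' :: "real \<Rightarrow> real"
  assume "G \<in> mixClass" and T: "Tq q G = ereal t0" and "ks_dist G G' \<le> ereal eps"
  then have close: "\<And>t. \<bar>G t - G' t\<bar> \<le> eps"
    by (simp add: ks_dist_le_iff)
  from \<open>G \<in> mixClass\<close> obtain F where "scale_mixture F" and G: "G = mixE F"
    unfolding mixClass_def scale_mixture_def scale_mixture_axioms_def by blast
  interpret scale_mixture F by fact
  have "Tq q G' \<le> ereal (t0 + B)"
    using \<open>0 < t0\<close> \<open>0 \<le> B\<close> close eps_above one_minus_mixE_ge[OF q \<open>0 < t0\<close>, of "t0 + B"] T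
    by (intro Tq_perturbed_le[of t0 B q G]) (auto simp: G)
  moreover have "ereal (t0 - B) \<le> Tq q G'"
    using q \<open>0 < t0\<close> \<open>0 \<le> B\<close> close eps_neg eps_below one_minus_mixE_le[OF q \<open>0 < t0\<close>] T
    by (intro Tq_perturbed_ge[of q t0 B G]) (auto simp: G mixE_neg)
  ultimately show "\<bar>Tq q G' - ereal t0\<bar> \<le> ereal B"
    by (cases "Tq q G'") auto
qed

lemma powr_div_shift:
  fixes x t0 h :: real
  assumes "0 < x" "0 < t0"
  shows "x powr ((t0 + h) / t0) = x * exp (h / t0 * ln x)"
proof -
  have "x powr ((t0 + h) / t0) = x powr 1 * x powr (h / t0)"
    using assms by (simp add: add_divide_distrib powr_add)
  then show ?thesis
    using assms by (simp add: powr_def[of x "h / t0"])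
qed

lemma small_eps_margin_above:
  fixes q t0 \<delta> eps B :: real
  assumes q: "0 < q" "q < 1" and "0 < t0" "0 < \<delta>" "0 \<le> eps"
    and B: "B = (1 + \<delta>) * (q / ln (1 / q)) * t0 * exp t0 * eps"
    and B_small: "B \<le> ln (1 + \<delta>)"
  shows "eps * exp (t0 + B) \<le> (1 / q) powr ((t0 + B) / t0) - 1 / q"
proof -
  define w where "w = B / t0 * ln (1 / q)"
  have w: "w = (1 + \<delta>) * q * exp t0 * eps"
    using B \<open>0 < t0\<close> q by (simp add: w_def)
  have "eps * exp (t0 + B) = eps * exp t0 * exp B"
    by (simp add: exp_add)
  also have "\<dots> \<le> eps * exp t0 * (1 + \<delta>)"
    using B_small \<open>0 < \<delta>\<close> \<open>0 \<le> eps\<close> by (intro mult_left_mono) (auto simp: ln_ge_iff)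
  also have "\<dots> = w / q"
    using q by (simp add: w)
  also have "\<dots> \<le> (exp w - 1) / q"
    using q exp_ge_add_one_self[of w] by (intro divide_right_mono) (linarith, simp)
  also have "\<dots> = (1 / q) powr ((t0 + B) / t0) - 1 / q"
    using q \<open>0 < t0\<close> by (simp add: powr_div_shift w_def diff_divide_distrib)
  finally show ?thesis .
qed

lemma small_eps_margin_below:
  fixes q t0 \<delta> eps B :: real
  assumes q: "0 < q" "q < 1" and "0 < t0" "0 < \<delta>" "0 \<le> eps"
    and B: "B = (1 + \<delta>) * (q / ln (1 / q)) * t0 * exp t0 * eps"
    and eps_small: "(1 + \<delta>) * q * exp t0 * eps \<le> \<delta>"
  shows "eps * exp t0 \<le> 1 / q - (1 / q) powr ((t0 - B) / t0)"
proof -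
  define w where "w = B / t0 * ln (1 / q)"
  have w: "w = (1 + \<delta>) * q * exp t0 * eps"
    using B \<open>0 < t0\<close> q by (simp add: w_def)
  have "0 \<le> w"
    using q \<open>0 < \<delta>\<close> \<open>0 \<le> eps\<close> by (simp add: w)
  have "eps * exp t0 = w / ((1 + \<delta>) * q)"
    using q \<open>0 < \<delta>\<close> by (simp add: w)
  also have "\<dots> \<le> w / ((1 + w) * q)"
    using q \<open>0 \<le> w\<close> eps_small by (intro divide_left_mono mult_right_mono) (auto simp: w)
  also have "\<dots> \<le> (1 - exp (- w)) / q"
  proof -
    have "exp (- w) \<le> 1 / (1 + w)"
      using \<open>0 \<le> w\<close> exp_ge_add_one_self[of w] by (simp add: exp_minus field_simps)
    then have "w / (1 + w) \<le> 1 - exp (- w)"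
      using \<open>0 \<le> w\<close> by (simp add: field_simps)
    then show ?thesis
      using q by (simp add: divide_right_mono flip: divide_divide_eq_left)
  qed
  also have "\<dots> = 1 / q - (1 / q) powr ((t0 - B) / t0)"
    using q \<open>0 < t0\<close> powr_div_shift[of "1 / q" t0 "- B"] by (simp add: w_def diff_divide_distrib)
  finally show ?thesis .
qed

lemma omega_star_le_linear:
  fixes q t0 \<delta> eps :: real
  assumes q: "0 < q" "q < 1" and "0 < t0" "0 < \<delta>" "0 < eps"
    and eps_neg: "eps < 1 / q - 1"
    and "(1 + \<delta>) * (q / ln (1 / q)) * t0 * exp t0 * eps \<le> ln (1 + \<delta>)"
    and "(1 + \<delta>) * q * exp t0 * eps \<le> \<delta>"
  shows "omega_star q eps t0 \<le> ereal ((1 + \<delta>) * (q / ln (1 / q)) * t0 * exp t0 * eps)"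
proof (rule omega_star_le[OF q \<open>0 < t0\<close> _ eps_neg])
  show "0 \<le> (1 + \<delta>) * (q / ln (1 / q)) * t0 * exp t0 * eps"
    using assms by simp
qed (use small_eps_margin_above[OF q \<open>0 < t0\<close> \<open>0 < \<delta>\<close> _ refl]
          small_eps_margin_below[OF q \<open>0 < t0\<close> \<open>0 < \<delta>\<close> _ refl] assms in auto)

theorem lemma4p5:
  fixes q t0 :: real
  assumes "0 < q" "q < 1" "t0 > ln (1 / q)"
  shows "\<forall>\<delta>>0. \<forall>\<^sub>F eps in at_right 0.
           omega_star q eps t0 \<le> ereal ((1 + \<delta>) * (q / ln (1 / q)) * t0 * exp t0 * eps)"
proof (intro allI impI)
  fix \<delta> :: real
  assume "0 < \<delta>"
  have "0 < ln (1 / q)"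
    using assms by simp
  then have "0 < t0"
    using assms by linarith
  have small: "\<forall>\<^sub>F eps in at_right 0. c * eps < d" if "0 < d" for c d :: real
    using order_tendstoD(2)[OF tendsto_mult_right_zero[OF tendsto_ident_at] that] .
  have "\<forall>\<^sub>F eps in at_right 0. 0 < eps \<and> eps < 1 / q - 1
          \<and> ((1 + \<delta>) * (q / ln (1 / q)) * t0 * exp t0) * eps < ln (1 + \<delta>)
          \<and> ((1 + \<delta>) * q * exp t0) * eps < \<delta>"
    using assms \<open>0 < \<delta>\<close>
    by (intro eventually_conj eventually_at_right_less small order_tendstoD(2)[OF tendsto_ident_at]) auto
  then show "\<forall>\<^sub>F eps in at_right 0.
      omega_star q eps t0 \<le> ereal ((1 + \<delta>) * (q / ln (1 / q)) * t0 * exp t0 * eps)"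
    by (rule eventually_mono)
      (use assms \<open>0 < t0\<close> \<open>0 < \<delta>\<close> in \<open>blast intro: omega_star_le_linear less_imp_le\<close>)
qed

end
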